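(* There exist absolute constants $\kappa_1,\kappa_2>1$ such that if $b_1\ge1$, $b_2\ge\kappa_1b_1$ and $b_3\ge\kappa_2b_2$, then for all $\beta\ge1$ (and $\gamma=(\alpha,\beta)$), $\mathcal{N}_{\gamma,2}(\mathcal{C}^{(3)}_{b_1,b_2,b_3})\subset\mathcal{C}^{(3)}_{b_1,b_2,b_3}$.
   Context: For $\beta\ge1$ let $g_{\gamma,2}:[0,1]\to[\tfrac12,1]$, $g_{\gamma,2}(x)=\tfrac12(x^{1/\beta}+1)$, be the inverse of $x\mapsto2^\beta(x-\tfrac12)^\beta$ on $[\tfrac12,1]$ (it does not depend on $\alpha$), and $\mathcal{N}_{\gamma,2}(\varphi)(x)=g_{\gamma,2}'(x)\,\varphi(g_{\gamma,2}(x))$. For $b_1,b_2,b_3>0$, $\mathcal{C}^{(3)}_{b_1,b_2,b_3}$ is the set of $\varphi\in C^3((0,1])$ with $\varphi(x)\ge0$, $|\varphi'(x)|\le\frac{b_1}{x}\varphi(x)$, $|\varphi''(x)|\le\frac{b_2}{x^2}\varphi(x)$, $|\varphi'''(x)|\le\frac{b_3}{x^3}\varphi(x)$ for all $x\in(0,1]$. *)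

theory Defs
  imports "HOL-Analysis.Analysis"
begin

text \<open>The inverse branch g_{gamma,2}(x) = (x^(1/beta) + 1)/2 (independent of alpha).\<close>
definition g2 :: "real \<Rightarrow> real \<Rightarrow> real" where
  "g2 \<beta> x = (x powr (1 / \<beta>) + 1) / 2"

definition N2 :: "real \<Rightarrow> (real \<Rightarrow> real) \<Rightarrow> real \<Rightarrow> real" where
  "N2 \<beta> \<phi> x = deriv (g2 \<beta>) x * \<phi> (g2 \<beta> x)"

definition C3 :: "real \<Rightarrow> real \<Rightarrow> real \<Rightarrow> (real \<Rightarrow> real) set" where
  "C3 b1 b2 b3 = {\<phi>. \<exists>f1 f2 f3.
     (\<forall>x\<in>{0<..1}. (\<phi> has_real_derivative f1 x) (at x within {0<..1}) \<and>
                   (f1 has_real_derivative f2 x) (at x within {0<..1}) \<and>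
                   (f2 has_real_derivative f3 x) (at x within {0<..1})) \<and>
     continuous_on {0<..1} f3 \<and>
     (\<forall>x\<in>{0<..1}. \<phi> x \<ge> 0 \<and>
        \<bar>f1 x\<bar> \<le> b1 / x * \<phi> x \<and>
        \<bar>f2 x\<bar> \<le> b2 / x ^ 2 * \<phi> x \<and>
        \<bar>f3 x\<bar> \<le> b3 / x ^ 3 * \<phi> x)}"

end

theory Submission
  imports Defs
begin

text \<open>
  Write \<open>s = 1 / \<beta>\<close> and \<open>a = 1 - s \<in> [0, 1)\<close>. The branch \<open>g = g2 \<beta>\<close> has derivative
  \<open>h x = x powr (- a) / (2 \<beta>)\<close>, so \<open>h' = - a h / x\<close> and every derivative of \<open>h\<close> is \<open>h / x ^ k\<close>
  times a coefficient bounded uniformly for \<open>0 \<le> a \<le> 1\<close>. By Faa di Bruno's formula the \<open>n\<close>-th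
  derivative of \<open>N2 \<beta> \<phi> = h (\<phi> \<circ> g)\<close> is a sum of terms \<open>c h ^ (k + 1) / x ^ (n - k) \<phi>\<^sup>(\<^sup>k\<^sup>) (g x)\<close>;
  the cone bounds for \<open>\<phi>\<close> at \<open>g x\<close> turn each of them into \<open>C b\<^sub>k t ^ k h \<phi> (g x) / x ^ n\<close>, where
  \<open>t = x h x / g x \<le> s / 2\<close> is the elasticity of \<open>g\<close>. The cone is therefore invariant as soon as
  \<open>a + b1 t \<le> b1\<close>, \<open>2 + 3 b1 t + b2 t\<^sup>2 \<le> b2\<close> and \<open>6 + 11 b1 t + 6 b2 t\<^sup>2 + b3 t\<^sup>3 \<le> b3\<close>,
  which hold for \<open>t \<le> 1 / 2\<close> with \<open>\<kappa>1 = \<kappa>2 = 5\<close>.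
\<close>

lemma mem_C3I:
  assumes "\<And>x. x \<in> {0<..1} \<Longrightarrow> (\<phi> has_real_derivative \<phi>' x) (at x within {0<..1})"
    and "\<And>x. x \<in> {0<..1} \<Longrightarrow> (\<phi>' has_real_derivative \<phi>'' x) (at x within {0<..1})"
    and "\<And>x. x \<in> {0<..1} \<Longrightarrow> (\<phi>'' has_real_derivative \<phi>''' x) (at x within {0<..1})"
    and "continuous_on {0<..1} \<phi>'''"
    and "\<And>x. x \<in> {0<..1} \<Longrightarrow> 0 \<le> \<phi> x"
    and "\<And>x. x \<in> {0<..1} \<Longrightarrow> \<bar>\<phi>' x\<bar> \<le> b1 / x * \<phi> x"
    and "\<And>x. x \<in> {0<..1} \<Longrightarrow> \<bar>\<phi>'' x\<bar> \<le> b2 / x ^ 2 * \<phi> x"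
    and "\<And>x. x \<in> {0<..1} \<Longrightarrow> \<bar>\<phi>''' x\<bar> \<le> b3 / x ^ 3 * \<phi> x"
  shows "\<phi> \<in> C3 b1 b2 b3"
  unfolding C3_def using assms by blast

lemma DERIV_chain_within_self:
  assumes "u ` S \<subseteq> S"
    and "(u has_real_derivative u') (at x within S)"
    and "(f has_real_derivative f') (at (u x) within S)"
  shows "((\<lambda>x. f (u x)) has_real_derivative f' * u') (at x within S)"
  using DERIV_image_chain[OF DERIV_subset[OF assms(3,1)] assms(2)] by (simp add: o_def)

lemma weighted_composition_derivatives:
  fixes S :: "real set"
  assumes uS: "u ` S \<subseteq> S"
    and du: "(u has_real_derivative w x) (at x within S)"
    and dw: "(w has_real_derivative w' x) (at x within S)"
    and dw': "(w' has_real_derivative w'' x) (at x within S)"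
    and dw'': "(w'' has_real_derivative w''' x) (at x within S)"
    and dp: "(p has_real_derivative p' (u x)) (at (u x) within S)"
    and dp': "(p' has_real_derivative p'' (u x)) (at (u x) within S)"
    and dp'': "(p'' has_real_derivative p''' (u x)) (at (u x) within S)"
  shows "((\<lambda>x. w x * p (u x)) has_real_derivative
           w' x * p (u x) + w x * w x * p' (u x)) (at x within S)" (is ?first)
    and "((\<lambda>x. w' x * p (u x) + w x * w x * p' (u x)) has_real_derivative
           w'' x * p (u x) + 3 * w x * w' x * p' (u x) + w x * w x * w x * p'' (u x))
           (at x within S)" (is ?second)
    and "((\<lambda>x. w'' x * p (u x) + 3 * w x * w' x * p' (u x) + w x * w x * w x * p'' (u x))
           has_real_derivative w''' x * p (u x) + (4 * w x * w'' x + 3 * w' x * w' x) * p' (u x)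
             + 6 * w x * w x * w' x * p'' (u x) + w x * w x * w x * w x * p''' (u x))
           (at x within S)" (is ?third)
proof -
  note c0 = DERIV_chain_within_self[OF uS du dp]
    and c1 = DERIV_chain_within_self[OF uS du dp']
    and c2 = DERIV_chain_within_self[OF uS du dp'']
  show ?first
    by (rule DERIV_cong[OF DERIV_mult[OF dw c0]]) (simp add: algebra_simps)
  show ?second
    by (rule DERIV_cong[OF DERIV_add[OF DERIV_mult[OF dw' c0]
          DERIV_mult[OF DERIV_mult[OF dw dw] c1]]])
      (simp add: algebra_simps)
  show ?third
    by (rule DERIV_cong[OF DERIV_add[OF DERIV_add[OF DERIV_mult[OF dw'' c0]
          DERIV_mult[OF DERIV_mult[OF DERIV_cmult[OF dw, of 3] dw'] c1]]
          DERIV_mult[OF DERIV_mult[OF DERIV_mult[OF dw dw] dw] c2]]])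
      (simp add: algebra_simps)
qed

lemma has_real_derivative_div_power:
  fixes h :: "real \<Rightarrow> real"
  assumes "(h has_real_derivative - a * h x / x) (at x within S)" and "x \<noteq> 0"
  shows "((\<lambda>x. c * h x / x ^ k) has_real_derivative - (c * (a + k)) * h x / x ^ Suc k)
           (at x within S)"
proof -
  have "((\<lambda>x. c * h x / x ^ k) has_real_derivative
          (c * (- a * h x / x) * x ^ k - c * h x * (k * x ^ (k - 1))) / (x ^ k * x ^ k))
          (at x within S)"
    using assms by (intro DERIV_divide DERIV_cmult DERIV_pow) auto
  moreover have "(c * (- a * h x / x) * x ^ k - c * h x * (k * x ^ (k - 1))) / (x ^ k * x ^ k)
      = - (c * (a + k)) * h x / x ^ Suc k"
    using assms(2) by (cases k) (simp_all add: field_simps)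
  ultimately show ?thesis by simp
qed

lemma power_weight_derivatives:
  fixes h :: "real \<Rightarrow> real"
  assumes h_deriv: "\<And>x. x \<in> S \<Longrightarrow> (h has_real_derivative - a * h x / x) (at x within S)"
    and "0 \<notin> S"
  shows "\<And>x. x \<in> S \<Longrightarrow>
      ((\<lambda>x. - a * h x / x) has_real_derivative a * (a + 1) * h x / x ^ 2) (at x within S)"
    and "\<And>x. x \<in> S \<Longrightarrow> ((\<lambda>x. a * (a + 1) * h x / x ^ 2) has_real_derivative
      - (a * (a + 1) * (a + 2)) * h x / x ^ 3) (at x within S)"
    and "continuous_on S (\<lambda>x. - (a * (a + 1) * (a + 2)) * h x / x ^ 3)"
proof -
  have x0: "x \<noteq> 0" if "x \<in> S" for x using that assms(2) by auto
  show "((\<lambda>x. - a * h x / x) has_real_derivative a * (a + 1) * h x / x ^ 2) (at x within S)"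
    if "x \<in> S" for x
    using has_real_derivative_div_power[OF h_deriv[OF that] x0[OF that], of "- a" 1]
    by (simp add: power2_eq_square)
  show "((\<lambda>x. a * (a + 1) * h x / x ^ 2) has_real_derivative
      - (a * (a + 1) * (a + 2)) * h x / x ^ 3) (at x within S)" if "x \<in> S" for x
    using has_real_derivative_div_power[OF h_deriv[OF that] x0[OF that], of "a * (a + 1)" 2]
    by simp
  show "continuous_on S (\<lambda>x. - (a * (a + 1) * (a + 2)) * h x / x ^ 3)"
    by (rule DERIV_continuous_on, rule has_real_derivative_div_power[OF h_deriv x0])
qed

lemma second_order_cone_inequality:
  fixes t b1 b2 :: real
  assumes "0 \<le> t" "t \<le> 1 / 2" "1 \<le> b1" "5 * b1 \<le> b2"
  shows "2 + 3 * b1 * t + b2 * t ^ 2 \<le> b2"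
proof -
  have "t ^ 2 \<le> 1 / 4"
    using power_mono[OF assms(2,1), of 2] by (simp add: power_divide)
  then have "b1 * t \<le> b1 / 2" "b2 * t ^ 2 \<le> b2 / 4"
    using assms by (auto intro: mult_left_mono[THEN order_trans])
  then show ?thesis using assms by linarith
qed

lemma third_order_cone_inequality:
  fixes t b1 b2 b3 :: real
  assumes "0 \<le> t" "t \<le> 1 / 2" "1 \<le> b1" "5 * b1 \<le> b2" "5 * b2 \<le> b3"
  shows "6 + 11 * b1 * t + 6 * b2 * t ^ 2 + b3 * t ^ 3 \<le> b3"
proof -
  have "t ^ 2 \<le> 1 / 4" "t ^ 3 \<le> 1 / 8"
    using power_mono[OF assms(2,1), of 2] power_mono[OF assms(2,1), of 3]
    by (simp_all add: power_divide)
  then have "b1 * t \<le> b1 / 2" "b2 * t ^ 2 \<le> b2 / 4" "b3 * t ^ 3 \<le> b3 / 8"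
    using assms by (auto intro: mult_left_mono[THEN order_trans])
  then show ?thesis using assms by linarith
qed

lemma weighted_term_bound:
  fixes x y H c C A b P t K :: real
  assumes x: "0 < x" and y: "0 < y" and H: "0 \<le> H" and c: "\<bar>c\<bar> \<le> C"
    and A: "\<bar>A\<bar> \<le> b / y ^ k * P"
    and t: "t = x * H / y" and K: "K = H * P / x ^ n" and n: "m + k = n"
  shows "\<bar>c / x ^ m * H ^ Suc k * A\<bar> \<le> C * (b * t ^ k) * K"
proof -
  have "H ^ Suc k * \<bar>A\<bar> \<le> H ^ Suc k * (b / y ^ k * P)"
    using H A by (intro mult_left_mono) auto
  also have "\<dots> = b * t ^ k * (H * P / x ^ k)"
    using x y by (simp add: t field_simps)
  finally have HA: "H ^ Suc k * \<bar>A\<bar> \<le> b * t ^ k * (H * P / x ^ k)" .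
  have "0 \<le> C" using c abs_ge_zero order_trans by blast
  have "\<bar>c / x ^ m * H ^ Suc k * A\<bar> = \<bar>c\<bar> / x ^ m * (H ^ Suc k * \<bar>A\<bar>)"
    using x H by (simp add: abs_mult)
  also have "\<dots> \<le> C / x ^ m * (b * t ^ k * (H * P / x ^ k))"
    by (rule mult_mono[OF divide_right_mono[OF c] HA]) (use x H \<open>0 \<le> C\<close> in auto)
  also have "\<dots> = C * (b * t ^ k) * K"
    using x by (simp add: K n[symmetric] power_add field_simps)
  finally show ?thesis .
qed

lemma first_derivative_bound:
  fixes x y H P a A1 b1 :: real
  assumes x: "0 < x" and y: "0 < y" and H: "0 \<le> H" and P: "0 \<le> P"
    and a: "0 \<le> a" "a \<le> 1" and t: "x * H / y \<le> (1 - a) / 2"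
    and A1: "\<bar>A1\<bar> \<le> b1 / y * P" and b1: "1 \<le> b1"
  shows "\<bar>- a * H / x * P + H * H * A1\<bar> \<le> b1 / x * (H * P)"
proof -
  define t where "t = x * H / y"
  define K where "K = H * P / x ^ 1"
  have "0 \<le> K" using x H P by (simp add: K_def)
  have T0: "\<bar>- a / x ^ 1 * H ^ Suc 0 * P\<bar> \<le> a * (1 * t ^ 0) * K"
    by (rule weighted_term_bound[OF x y H _ _ t_def K_def]) (use a P in simp_all)
  have T1: "\<bar>1 / x ^ 0 * H ^ Suc 1 * A1\<bar> \<le> 1 * (b1 * t ^ 1) * K"
    by (rule weighted_term_bound[OF x y H _ _ t_def K_def]) (use A1 in simp_all)
  have "b1 * t \<le> b1 * ((1 - a) / 2)"
    using b1 t by (intro mult_left_mono) (auto simp: t_def)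
  moreover have "1 * (1 + a) \<le> b1 * (1 + a)"
    using b1 a by (intro mult_right_mono) auto
  \<comment> \<open>\<open>t \<le> 1 / 2\<close> would not suffice here: for \<open>b1 = 1\<close> the term \<open>a K\<close> coming from
    the weight itself is absorbed only thanks to the margin \<open>(1 - a) / 2\<close>.\<close>
  ultimately have "a + b1 * t \<le> b1" using a(2) by (simp add: algebra_simps)
  have "\<bar>- a * H / x * P + H * H * A1\<bar> = \<bar>- a / x ^ 1 * H ^ Suc 0 * P + 1 / x ^ 0 * H ^ Suc 1 * A1\<bar>"
    by (simp add: power2_eq_square)
  also have "\<dots> \<le> \<bar>- a / x ^ 1 * H ^ Suc 0 * P\<bar> + \<bar>1 / x ^ 0 * H ^ Suc 1 * A1\<bar>"
    by (rule abs_triangle_ineq)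
  also have "\<dots> \<le> a * (1 * t ^ 0) * K + 1 * (b1 * t ^ 1) * K"
    using T0 T1 by (rule add_mono)
  also have "\<dots> \<le> b1 * K"
    using mult_right_mono[OF \<open>a + b1 * t \<le> b1\<close> \<open>0 \<le> K\<close>] by (simp add: algebra_simps)
  finally show ?thesis by (simp add: K_def)
qed

lemma second_derivative_bound:
  fixes x y H P a A1 A2 b1 b2 h1 h2 :: real
  assumes x: "0 < x" and y: "0 < y" and H: "0 \<le> H" and P: "0 \<le> P"
    and a: "0 \<le> a" "a \<le> 1" and t: "x * H / y \<le> 1 / 2"
    and h1: "h1 = - a * H / x" and h2: "h2 = a * (a + 1) * H / x ^ 2"
    and A1: "\<bar>A1\<bar> \<le> b1 / y * P" and A2: "\<bar>A2\<bar> \<le> b2 / y ^ 2 * P"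
    and b: "1 \<le> b1" "5 * b1 \<le> b2"
  shows "\<bar>h2 * P + 3 * H * h1 * A1 + H * H * H * A2\<bar> \<le> b2 / x ^ 2 * (H * P)"
proof -
  define t where "t = x * H / y"
  define K where "K = H * P / x ^ 2"
  have "0 \<le> t" "0 \<le> K" using x y H P by (simp_all add: t_def K_def)
  have "a * (a + 1) \<le> 1 * 2" using a by (intro mult_mono) auto
  then have coeff: "\<bar>a * (a + 1)\<bar> \<le> 2" using a by simp
  have T0: "\<bar>a * (a + 1) / x ^ 2 * H ^ Suc 0 * P\<bar> \<le> 2 * (1 * t ^ 0) * K"
    by (rule weighted_term_bound[OF x y H _ _ t_def K_def]) (use coeff P in simp_all)
  have T1: "\<bar>- (3 * a) / x ^ 1 * H ^ Suc 1 * A1\<bar> \<le> 3 * (b1 * t ^ 1) * K"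
    by (rule weighted_term_bound[OF x y H _ _ t_def K_def]) (use a A1 in simp_all)
  have T2: "\<bar>1 / x ^ 0 * H ^ Suc 2 * A2\<bar> \<le> 1 * (b2 * t ^ 2) * K"
    by (rule weighted_term_bound[OF x y H _ _ t_def K_def]) (use A2 in simp_all)
  have "\<bar>h2 * P + 3 * H * h1 * A1 + H * H * H * A2\<bar>
      = \<bar>a * (a + 1) / x ^ 2 * H ^ Suc 0 * P + - (3 * a) / x ^ 1 * H ^ Suc 1 * A1
          + 1 / x ^ 0 * H ^ Suc 2 * A2\<bar>"
    using x by (simp add: h1 h2 field_simps power2_eq_square power3_eq_cube)
  also have "\<dots> \<le> 2 * (1 * t ^ 0) * K + 3 * (b1 * t ^ 1) * K + 1 * (b2 * t ^ 2) * K"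
    using T0 T1 T2 by arith
  also have "\<dots> \<le> b2 * K"
    using mult_right_mono[OF second_order_cone_inequality[OF \<open>0 \<le> t\<close> _ b] \<open>0 \<le> K\<close>] t
    by (simp add: t_def algebra_simps)
  finally show ?thesis by (simp add: K_def)
qed

lemma third_derivative_bound:
  fixes x y H P a A1 A2 A3 b1 b2 b3 h1 h2 h3 :: real
  assumes x: "0 < x" and y: "0 < y" and H: "0 \<le> H" and P: "0 \<le> P"
    and a: "0 \<le> a" "a \<le> 1" and t: "x * H / y \<le> 1 / 2"
    and h1: "h1 = - a * H / x" and h2: "h2 = a * (a + 1) * H / x ^ 2"
    and h3: "h3 = - (a * (a + 1) * (a + 2)) * H / x ^ 3"
    and A1: "\<bar>A1\<bar> \<le> b1 / y * P" and A2: "\<bar>A2\<bar> \<le> b2 / y ^ 2 * P"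
    and A3: "\<bar>A3\<bar> \<le> b3 / y ^ 3 * P"
    and b: "1 \<le> b1" "5 * b1 \<le> b2" "5 * b2 \<le> b3"
  shows "\<bar>h3 * P + (4 * H * h2 + 3 * h1 * h1) * A1 + 6 * H * H * h1 * A2 + H * H * H * H * A3\<bar>
           \<le> b3 / x ^ 3 * (H * P)"
proof -
  define t where "t = x * H / y"
  define K where "K = H * P / x ^ 3"
  have "0 \<le> t" "0 \<le> K" using x y H P by (simp_all add: t_def K_def)
  have "a * (a + 1) \<le> 1 * 2" using a by (intro mult_mono) auto
  moreover from this have "a * (a + 1) * (a + 2) \<le> 2 * 3" using a by (intro mult_mono) auto
  moreover have "a ^ 2 \<le> 1" using a by (simp add: power_le_one)
  ultimately have coeffs: "\<bar>- (a * (a + 1) * (a + 2))\<bar> \<le> 6"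
    "\<bar>4 * a * (a + 1) + 3 * a ^ 2\<bar> \<le> 11" "\<bar>- (6 * a)\<bar> \<le> 6"
    using a by simp_all
  have T0: "\<bar>- (a * (a + 1) * (a + 2)) / x ^ 3 * H ^ Suc 0 * P\<bar> \<le> 6 * (1 * t ^ 0) * K"
    by (rule weighted_term_bound[OF x y H _ _ t_def K_def]) (use coeffs P in simp_all)
  have T1: "\<bar>(4 * a * (a + 1) + 3 * a ^ 2) / x ^ 2 * H ^ Suc 1 * A1\<bar> \<le> 11 * (b1 * t ^ 1) * K"
    by (rule weighted_term_bound[OF x y H _ _ t_def K_def]) (use coeffs A1 in simp_all)
  have T2: "\<bar>- (6 * a) / x ^ 1 * H ^ Suc 2 * A2\<bar> \<le> 6 * (b2 * t ^ 2) * K"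
    by (rule weighted_term_bound[OF x y H _ _ t_def K_def]) (use coeffs A2 in simp_all)
  have T3: "\<bar>1 / x ^ 0 * H ^ Suc 3 * A3\<bar> \<le> 1 * (b3 * t ^ 3) * K"
    by (rule weighted_term_bound[OF x y H _ _ t_def K_def]) (use A3 in simp_all)
  have "\<bar>h3 * P + (4 * H * h2 + 3 * h1 * h1) * A1 + 6 * H * H * h1 * A2 + H * H * H * H * A3\<bar>
      = \<bar>- (a * (a + 1) * (a + 2)) / x ^ 3 * H ^ Suc 0 * P
          + (4 * a * (a + 1) + 3 * a ^ 2) / x ^ 2 * H ^ Suc 1 * A1
          + - (6 * a) / x ^ 1 * H ^ Suc 2 * A2 + 1 / x ^ 0 * H ^ Suc 3 * A3\<bar>"
    using x by (simp add: h1 h2 h3 field_simps power2_eq_square power3_eq_cube power4_eq_xxxx)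
  also have "\<dots> \<le> 6 * (1 * t ^ 0) * K + 11 * (b1 * t ^ 1) * K + 6 * (b2 * t ^ 2) * K
      + 1 * (b3 * t ^ 3) * K"
    using T0 T1 T2 T3 by arith
  also have "\<dots> \<le> b3 * K"
    using mult_right_mono[OF third_order_cone_inequality[OF \<open>0 \<le> t\<close> _ b] \<open>0 \<le> K\<close>] t
    by (simp add: t_def algebra_simps)
  finally show ?thesis by (simp add: K_def)
qed

lemma C3_weighted_composition:
  fixes u h q \<phi> :: "real \<Rightarrow> real" and a b1 b2 b3 :: real
  assumes u_maps: "\<And>x. x \<in> {0<..1} \<Longrightarrow> u x \<in> {0<..1}"
    and u_deriv: "\<And>x. x \<in> {0<..1} \<Longrightarrow> (u has_real_derivative h x) (at x within {0<..1})"
    and h_deriv: "\<And>x. x \<in> {0<..1} \<Longrightarrow> (h has_real_derivative - a * h x / x) (at x within {0<..1})"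
    and h_nonneg: "\<And>x. x \<in> {0<..1} \<Longrightarrow> 0 \<le> h x"
    and a: "0 \<le> a" "a \<le> 1"
    and elasticity: "\<And>x. x \<in> {0<..1} \<Longrightarrow> x * h x / u x \<le> (1 - a) / 2"
    and b: "1 \<le> b1" "5 * b1 \<le> b2" "5 * b2 \<le> b3"
    and \<phi>: "\<phi> \<in> C3 b1 b2 b3"
    and q: "\<And>x. x \<in> {0<..1} \<Longrightarrow> q x = h x * \<phi> (u x)"
  shows "q \<in> C3 b1 b2 b3"
proof -
  define S :: "real set" where "S = {0<..1}"
  note u_maps = u_maps[folded S_def] and u_deriv = u_deriv[folded S_def]
    and h_deriv = h_deriv[folded S_def] and h_nonneg = h_nonneg[folded S_def]
    and elasticity = elasticity[folded S_def] and q = q[folded S_def]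
  have S_pos: "0 < x" if "x \<in> S" for x using that by (simp add: S_def)
  from \<phi> obtain f1 f2 f3 where
    df: "\<And>x. x \<in> S \<Longrightarrow> (\<phi> has_real_derivative f1 x) (at x within S)"
      "\<And>x. x \<in> S \<Longrightarrow> (f1 has_real_derivative f2 x) (at x within S)"
      "\<And>x. x \<in> S \<Longrightarrow> (f2 has_real_derivative f3 x) (at x within S)"
    and cf3: "continuous_on S f3"
    and \<phi>_bounds: "\<And>x. x \<in> S \<Longrightarrow> 0 \<le> \<phi> x" "\<And>x. x \<in> S \<Longrightarrow> \<bar>f1 x\<bar> \<le> b1 / x * \<phi> x"
      "\<And>x. x \<in> S \<Longrightarrow> \<bar>f2 x\<bar> \<le> b2 / x ^ 2 * \<phi> x"
      "\<And>x. x \<in> S \<Longrightarrow> \<bar>f3 x\<bar> \<le> b3 / x ^ 3 * \<phi> x"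
    unfolding C3_def S_def by blast
  define h1 where "h1 = (\<lambda>x. - a * h x / x)"
  define h2 where "h2 = (\<lambda>x. a * (a + 1) * h x / x ^ 2)"
  define h3 where "h3 = (\<lambda>x. - (a * (a + 1) * (a + 2)) * h x / x ^ 3)"
  have dh: "(h has_real_derivative h1 x) (at x within S)" if "x \<in> S" for x
    using h_deriv[OF that] by (simp add: h1_def)
  have dh1: "(h1 has_real_derivative h2 x) (at x within S)"
    and dh2: "(h2 has_real_derivative h3 x) (at x within S)" if "x \<in> S" for x
    using power_weight_derivatives(1,2)[OF h_deriv _ that]
    by (simp_all add: S_def h1_def h2_def h3_def)
  have ch3: "continuous_on S h3"
    using power_weight_derivatives(3)[OF h_deriv] by (simp add: S_def h3_def)
  define F1 where "F1 = (\<lambda>x. h1 x * \<phi> (u x) + h x * h x * f1 (u x))"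
  define F2 where "F2 = (\<lambda>x. h2 x * \<phi> (u x) + 3 * h x * h1 x * f1 (u x) + h x * h x * h x * f2 (u x))"
  define F3 where "F3 = (\<lambda>x. h3 x * \<phi> (u x) + (4 * h x * h2 x + 3 * h1 x * h1 x) * f1 (u x)
    + 6 * h x * h x * h1 x * f2 (u x) + h x * h x * h x * h x * f3 (u x))"
  have u_image: "u ` S \<subseteq> S" using u_maps by auto
  have dq: "(q has_real_derivative F1 x) (at x within S)"
    and dF1: "(F1 has_real_derivative F2 x) (at x within S)"
    and dF2: "(F2 has_real_derivative F3 x) (at x within S)" if "x \<in> S" for x
  proof -
    note derivs = weighted_composition_derivatives
      [where w = h and w' = h1 and w'' = h2 and w''' = h3
         and p = \<phi> and p' = f1 and p'' = f2 and p''' = f3,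
       OF u_image u_deriv[OF that] dh[OF that] dh1[OF that] dh2[OF that] df[OF u_maps[OF that]]]
    show "(q has_real_derivative F1 x) (at x within S)"
      unfolding F1_def
      by (rule has_field_derivative_transform_within[OF derivs(1) zero_less_one that])
        (simp add: q)
    show "(F1 has_real_derivative F2 x) (at x within S)"
      unfolding F1_def F2_def by (rule derivs(2))
    show "(F2 has_real_derivative F3 x) (at x within S)"
      unfolding F2_def F3_def by (rule derivs(3))
  qed
  have cu: "continuous_on S u" by (rule DERIV_continuous_on[OF u_deriv])
  have "continuous_on S F3"
    unfolding F3_def
    by (intro continuous_intros ch3 DERIV_continuous_on[OF dh] DERIV_continuous_on[OF dh1]
        DERIV_continuous_on[OF dh2] continuous_on_compose2[OF _ cu u_image]
        DERIV_continuous_on[OF df(1)] DERIV_continuous_on[OF df(2)]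
        DERIV_continuous_on[OF df(3)] cf3)
  moreover have "0 \<le> q x" "\<bar>F1 x\<bar> \<le> b1 / x * q x" "\<bar>F2 x\<bar> \<le> b2 / x ^ 2 * q x"
    "\<bar>F3 x\<bar> \<le> b3 / x ^ 3 * q x" if "x \<in> S" for x
  proof -
    have ux: "u x \<in> S" using u_maps[OF that] .
    have t: "x * h x / u x \<le> 1 / 2" using elasticity[OF that] a by simp
    note args = S_pos[OF that] S_pos[OF ux] h_nonneg[OF that] \<phi>_bounds(1)[OF ux] a
    show "0 \<le> q x" using q[OF that] h_nonneg[OF that] \<phi>_bounds(1)[OF ux] by simp
    show "\<bar>F1 x\<bar> \<le> b1 / x * q x"
      using first_derivative_bound[OF args elasticity[OF that] \<phi>_bounds(2)[OF ux] b(1)]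
      by (simp add: q[OF that] F1_def h1_def)
    show "\<bar>F2 x\<bar> \<le> b2 / x ^ 2 * q x"
      using second_derivative_bound[OF args t _ _ \<phi>_bounds(2,3)[OF ux] b(1,2)]
      by (simp add: q[OF that] F2_def h1_def h2_def)
    show "\<bar>F3 x\<bar> \<le> b3 / x ^ 3 * q x"
      using third_derivative_bound[OF args t _ _ _ \<phi>_bounds(2-4)[OF ux] b]
      by (simp add: q[OF that] F3_def h1_def h2_def h3_def)
  qed
  ultimately show ?thesis
    using dq dF1 dF2
    by (intro mem_C3I[where \<phi>' = F1 and \<phi>'' = F2 and \<phi>''' = F3]) (auto simp: S_def)
qed

lemma has_real_derivative_powr_div:
  fixes x r c :: real
  assumes "0 < x"
  shows "((\<lambda>x. x powr r / c) has_real_derivative r * (x powr r / c) / x) (at x)"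
  using DERIV_cdivide[OF has_real_derivative_powr[OF assms, of r], of c] assms
  by (simp add: powr_diff mult.commute)

lemma g2_maps_unit_interval:
  assumes "0 < \<beta>" and "x \<in> {0<..1}"
  shows "g2 \<beta> x \<in> {0<..1}"
proof -
  define y where "y = x powr (1 / \<beta>)"
  have "0 \<le> y" "y \<le> 1" using assms by (auto simp: y_def intro: powr_le1)
  then show ?thesis by (simp add: g2_def flip: y_def)
qed

lemma g2_has_real_derivative:
  assumes "0 < x"
  shows "(g2 \<beta> has_real_derivative x powr (1 / \<beta> - 1) / (2 * \<beta>)) (at x)"
proof -
  have "((\<lambda>x. (x powr (1 / \<beta>) + 1) / 2) has_real_derivative (1 / \<beta> * x powr (1 / \<beta> - 1) + 0) / 2)
          (at x)"
    by (intro DERIV_cdivide DERIV_add has_real_derivative_powr assms DERIV_const)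
  then show ?thesis by (simp add: g2_def[abs_def] mult.commute)
qed

lemma g2_elasticity_le:
  assumes "0 < \<beta>" and "x \<in> {0<..1}"
  shows "x * (x powr (1 / \<beta> - 1) / (2 * \<beta>)) / g2 \<beta> x \<le> 1 / (2 * \<beta>)"
proof -
  define y where "y = x powr (1 / \<beta>)"
  have "0 \<le> y" "y \<le> 1" using assms by (auto simp: y_def intro: powr_le1)
  have "x * (x powr (1 / \<beta> - 1) / (2 * \<beta>)) / g2 \<beta> x = y / (\<beta> * (y + 1))"
    using assms by (simp add: y_def g2_def powr_diff)
  also have "\<dots> \<le> 1 / (2 * \<beta>)"
  proof -
    have "0 < \<beta> * (y + 1)" "\<beta> * y \<le> \<beta> * 1"
      using assms(1) \<open>0 \<le> y\<close> \<open>y \<le> 1\<close> by (auto intro: mult_left_mono)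
    then show ?thesis using assms(1) by (simp add: field_simps)
  qed
  finally show ?thesis .
qed

lemma N2_eq_weighted_composition:
  assumes "0 < x"
  shows "N2 \<beta> \<phi> x = x powr (1 / \<beta> - 1) / (2 * \<beta>) * \<phi> (g2 \<beta> x)"
  using DERIV_imp_deriv[OF g2_has_real_derivative[OF assms]] by (simp add: N2_def)

theorem lemmaA1:
  shows "\<exists>\<kappa>1 \<kappa>2 :: real. \<kappa>1 > 1 \<and> \<kappa>2 > 1 \<and>
    (\<forall>b1 b2 b3 :: real. b1 \<ge> 1 \<longrightarrow> b2 \<ge> \<kappa>1 * b1 \<longrightarrow> b3 \<ge> \<kappa>2 * b2 \<longrightarrow>
      (\<forall>\<beta> :: real. \<beta> \<ge> 1 \<longrightarrow> N2 \<beta> ` C3 b1 b2 b3 \<subseteq> C3 b1 b2 b3))"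
proof (intro exI[of _ 5] conjI allI impI image_subsetI)
  fix b1 b2 b3 \<beta> :: real and \<phi> :: "real \<Rightarrow> real"
  assume b: "1 \<le> b1" "5 * b1 \<le> b2" "5 * b2 \<le> b3" and \<beta>: "1 \<le> \<beta>"
    and \<phi>: "\<phi> \<in> C3 b1 b2 b3"
  define a where "a = 1 - 1 / \<beta>"
  define h where "h = (\<lambda>x::real. x powr (1 / \<beta> - 1) / (2 * \<beta>))"
  have a: "0 \<le> a" "a \<le> 1" using \<beta> by (auto simp: a_def)
  show "N2 \<beta> \<phi> \<in> C3 b1 b2 b3"
  proof (rule C3_weighted_composition[where u = "g2 \<beta>" and h = h, OF _ _ _ _ a _ b \<phi>])
    fix x :: real
    assume x: "x \<in> {0<..1}"
    then have "0 < x" by simp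
    show "g2 \<beta> x \<in> {0<..1}" using g2_maps_unit_interval \<beta> x by simp
    show "(g2 \<beta> has_real_derivative h x) (at x within {0<..1})"
      unfolding h_def by (rule has_field_derivative_at_within[OF g2_has_real_derivative[OF \<open>0 < x\<close>]])
    show "(h has_real_derivative - a * h x / x) (at x within {0<..1})"
      using has_real_derivative_powr_div[OF \<open>0 < x\<close>, of "1 / \<beta> - 1" "2 * \<beta>"]
      unfolding h_def a_def by (auto intro: has_field_derivative_at_within)
    show "0 \<le> h x" using \<beta> by (simp add: h_def)
    show "x * h x / g2 \<beta> x \<le> (1 - a) / 2"
      using g2_elasticity_le[of \<beta> x] \<beta> x by (simp add: h_def a_def)
    show "N2 \<beta> \<phi> x = h x * \<phi> (g2 \<beta> x)"
      using N2_eq_weighted_composition[OF \<open>0 < x\<close>] by (simp add: h_def)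
  qed
qed simp_all

end
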